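(* Let $C$ be an $n$-dimensional tree or dual tree and let $F_C:V_0(C)\to V_1(C)$ be a non-zero associated map of bidegree $(n,p)$ satisfying the naturality rule, the filtration rule and the duality rule. If $p=2n$, then $F_C$ agrees with the Sarkar–Seed–Szabo formula: for a tree with starting circles $x_1,\dots,x_{n+1}$ and ending circle $y$, $F_C(x_1\cdots x_{n+1})=y$ and $F_C$ vanishes on all other monomials; for a dual tree with starting circle $x$ and ending circles $y_1,\dots,y_{n+1}$, $F_C(1)=1\otimes\cdots\otimes1$ and $F_C(x)=0$. If $p>2n$, then $F_C$ must be zero (i.e. no such non-zero map exists).
   Context: An $n$-dimensional resolution configuration $C$ is a finite set of pairwise disjoint embedded circles in $S^2$ (the starting circles) together with $n$ pairwise disjoint embedded arcs whose endpoints lie on the circles and whose interiors are disjoint from the circles. The ending circles are obtained by surgery along all arcs. The dual configuration $C^*$ consists of the ending circles with dual arcs obtained by rotating each arc $90$ degrees counterclockwise; the mirror $m(C)$ is the reflection of $C$ in $\mathbb{R}\times\{0\}\subset\mathbb{R}^2\cup\{\infty\}=S^2$. $C$ is connected if the graph with vertices the circles and edges the arcs is connected. A connected $n$-dimensional configuration is a tree if it has exactly $n+1$ starting circles and one ending circle; a dual tree is the dual of a tree. $V_0(C)=\bigotimes_i\mathbb{F}_2[x_i]/(x_i^2)$ over starting circles $x_i$, $V_1(C)=\bigotimes_j\mathbb{F}_2[y_j]/(y_j^2)$ over ending circles $y_j$, with bases of monomials. Quantum grading: in each factor $\mathrm{gr}_q(1)=1$, $\mathrm{gr}_q(z)=-1$,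 summed over factors, and for an $n$-dimensional configuration monomials of $V_1(C)$ get an extra shift of $+n$. A linear map $F_C$ has bidegree $(n,p)$ if it sends each monomial to a combination of monomials with quantum grading larger by $p$. Rules: (Naturality) if an orientation-preserving diffeomorphism of $S^2$ sends $C$ to $C'$, then $F_C=F_{C'}$ under the induced identifications. (Duality) with canonical identifications $V_0(m(C^* ))=V_1(C)$, $V_1(m(C^* ))=V_0(C)$, and $a\mapsto a^*$ the map on monomials induced by $1^*=z$, $z^*=1$ in each factor, the coefficient of $b$ in $F_C(a)$ equals the coefficient of $a^*$ in $F_{m(C^* )}(b^* )$ for all monomials $a\in V_0(C)$, $b\in V_1(C)$. (Filtration) for a point $P$ on the starting circles, with $x(P)$, $y(P)$ the starting and ending circles containing $P$: if monomial $a$ is divisible by $x(P)$ and the coefficient of monomial $b$ in $F_C(a)$ is non-zero, then $y(P)$ divides $b$. *)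

theory Defs
  imports Main
begin

text \<open>
Combinatorial model of a connected resolution configuration in S^2 with n \<ge> 1 arcs.
Contract every arc to a 4-valent vertex; the result is a connected 4-valent graph
cellularly embedded in S^2, i.e. a planar combinatorial map:
  darts D, edge involution alph (edges = segments of the starting circles between
  arc endpoints), vertex rotation sig (counterclockwise cyclic order of the 4 darts
  at a vertex = at an arc), and a marker mrk pairing each dart with the adjacent
  dart at its vertex with which it forms a strand of a starting circle (0-resolution).
  Ending circles use the other adjacent pairing (1-resolution = surgery).
\<close>

record rc =
  darts :: "nat set"
  alph  :: "nat \<Rightarrow> nat"
  sig   :: "nat \<Rightarrow> nat"
  mrk   :: "nat \<Rightarrow> nat"

definition step_rel :: "nat set \<Rightarrow> (nat \<Rightarrow> nat) \<Rightarrow> (nat \<times> nat) set" where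
  "step_rel D f = {(x, f x) | x. x \<in> D}"

definition orb :: "nat set \<Rightarrow> (nat \<Rightarrow> nat) \<Rightarrow> nat \<Rightarrow> nat set" where
  "orb D f d = {e. (d, e) \<in> (step_rel D f)\<^sup>*}"

definition orbs :: "nat set \<Rightarrow> (nat \<Rightarrow> nat) \<Rightarrow> nat set set" where
  "orbs D f = orb D f ` D"

definition mrk' :: "rc \<Rightarrow> nat \<Rightarrow> nat" where
  "mrk' C d = (if mrk C d = sig C d then sig C (sig C (sig C d)) else sig C d)"

definition rc_wf :: "rc \<Rightarrow> bool" where
  "rc_wf C \<longleftrightarrow> finite (darts C) \<and>
     (\<forall>d\<in>darts C. alph C d \<in> darts C \<and> alph C d \<noteq> d \<and> alph C (alph C d) = d) \<and>
     (\<forall>d\<in>darts C. sig C d \<in> darts C) \<and> inj_on (sig C) (darts C) \<and>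
     (\<forall>d\<in>darts C. sig C (sig C (sig C (sig C d))) = d \<and> sig C (sig C d) \<noteq> d) \<and>
     (\<forall>d\<in>darts C. (mrk C d = sig C d \<or> sig C (mrk C d) = d) \<and>
        mrk C (mrk C d) = d \<and> mrk C (sig C (sig C d)) = sig C (sig C (mrk C d)))"

definition rc_connected :: "rc \<Rightarrow> bool" where
  "rc_connected C \<longleftrightarrow> (\<forall>d\<in>darts C. \<forall>e\<in>darts C.
     (d, e) \<in> (step_rel (darts C) (alph C) \<union> step_rel (darts C) (sig C))\<^sup>*)"

text \<open>genus 0 (Euler: V - E + F = 2) i.e. the map lives in S^2\<close>
definition rc_planar :: "rc \<Rightarrow> bool" where
  "rc_planar C \<longleftrightarrow>
     card (orbs (darts C) (sig C \<circ> alph C)) + card (orbs (darts C) (sig C))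
       = card (orbs (darts C) (alph C)) + 2"

definition rc_conf :: "rc \<Rightarrow> bool" where
  "rc_conf C \<longleftrightarrow> rc_wf C \<and> rc_connected C \<and> rc_planar C"

text \<open>number of arcs = dimension\<close>
definition dim :: "rc \<Rightarrow> nat" where
  "dim C = card (darts C) div 4"

text \<open>circles are represented as the sets of darts lying on them\<close>
definition start_circle :: "rc \<Rightarrow> nat \<Rightarrow> nat set" where
  "start_circle C d = {e. (d, e) \<in> (step_rel (darts C) (alph C) \<union> step_rel (darts C) (mrk C))\<^sup>*}"

definition end_circle :: "rc \<Rightarrow> nat \<Rightarrow> nat set" where
  "end_circle C d = {e. (d, e) \<in> (step_rel (darts C) (alph C) \<union> step_rel (darts C) (mrk' C))\<^sup>*}"

definition start_circles :: "rc \<Rightarrow> nat set set" where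
  "start_circles C = start_circle C ` darts C"

definition end_circles :: "rc \<Rightarrow> nat set set" where
  "end_circles C = end_circle C ` darts C"

text \<open>dual configuration C^* (swap 0- and 1-resolution) and mirror m(C) (reverse orientation)\<close>
definition rc_dual :: "rc \<Rightarrow> rc" where
  "rc_dual C = C\<lparr>mrk := mrk' C\<rparr>"

definition rc_mirror :: "rc \<Rightarrow> rc" where
  "rc_mirror C = C\<lparr>sig := (\<lambda>d. sig C (sig C (sig C d)))\<rparr>"

definition is_tree :: "rc \<Rightarrow> bool" where
  "is_tree C \<longleftrightarrow> rc_conf C \<and> card (start_circles C) = dim C + 1 \<and> card (end_circles C) = 1"

definition is_dual_tree :: "rc \<Rightarrow> bool" where
  "is_dual_tree C \<longleftrightarrow> rc_conf C \<and> is_tree (rc_dual C)"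

text \<open>
A monomial of V_0(C) is a set a of starting circles (the product of the x_i, i in a);
a monomial of V_1(C) is a set b of ending circles. An F_2-linear map F_C is given by
its matrix: F C a b is the coefficient of b in F_C(a).
\<close>
type_synonym assoc_maps = "rc \<Rightarrow> nat set set \<Rightarrow> nat set set \<Rightarrow> bool"

definition gr0 :: "rc \<Rightarrow> nat set set \<Rightarrow> int" where
  "gr0 C a = int (card (start_circles C)) - 2 * int (card a)"

definition gr1 :: "rc \<Rightarrow> nat set set \<Rightarrow> int" where
  "gr1 C b = int (card (end_circles C)) - 2 * int (card b) + int (dim C)"

definition has_bidegree :: "assoc_maps \<Rightarrow> rc \<Rightarrow> int \<Rightarrow> bool" where
  "has_bidegree F C p \<longleftrightarrow> (\<forall>a \<subseteq> start_circles C. \<forall>b \<subseteq> end_circles C.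
      F C a b \<longrightarrow> gr1 C b = gr0 C a + p)"

definition nonzero_map :: "assoc_maps \<Rightarrow> rc \<Rightarrow> bool" where
  "nonzero_map F C \<longleftrightarrow> (\<exists>a \<subseteq> start_circles C. \<exists>b \<subseteq> end_circles C. F C a b)"

text \<open>isomorphism = orientation preserving diffeomorphism of S^2 carrying C to C'\<close>
definition rc_iso :: "(nat \<Rightarrow> nat) \<Rightarrow> rc \<Rightarrow> rc \<Rightarrow> bool" where
  "rc_iso \<phi> C C' \<longleftrightarrow> bij_betw \<phi> (darts C) (darts C') \<and>
     (\<forall>d\<in>darts C. \<phi> (alph C d) = alph C' (\<phi> d) \<and> \<phi> (sig C d) = sig C' (\<phi> d) \<and>
        \<phi> (mrk C d) = mrk C' (\<phi> d))"

definition cimg :: "(nat \<Rightarrow> nat) \<Rightarrow> nat set set \<Rightarrow> nat set set" where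
  "cimg \<phi> a = (\<lambda>c. \<phi> ` c) ` a"

definition naturality :: "assoc_maps \<Rightarrow> rc \<Rightarrow> bool" where
  "naturality F C \<longleftrightarrow> (\<forall>C' \<phi>. rc_conf C' \<and> rc_iso \<phi> C C' \<longrightarrow>
     (\<forall>a \<subseteq> start_circles C. \<forall>b \<subseteq> end_circles C. F C a b = F C' (cimg \<phi> a) (cimg \<phi> b)))"

text \<open>points P on starting circles (away from the arcs) lie on a segment = edge {d, alph d};
  x(P) = start_circle C d, y(P) = end_circle C d\<close>
definition filtration :: "assoc_maps \<Rightarrow> rc \<Rightarrow> bool" where
  "filtration F C \<longleftrightarrow> (\<forall>d\<in>darts C. \<forall>a \<subseteq> start_circles C. \<forall>b \<subseteq> end_circles C.
      start_circle C d \<in> a \<and> F C a b \<longrightarrow> end_circle C d \<in> b)"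

text \<open>V_0(m(C^*)) = V_1(C), V_1(m(C^*)) = V_0(C) literally (same dart sets);
  the star of a monomial is the complementary set of circles\<close>
definition duality :: "assoc_maps \<Rightarrow> rc \<Rightarrow> bool" where
  "duality F C \<longleftrightarrow> (\<forall>a \<subseteq> start_circles C. \<forall>b \<subseteq> end_circles C.
      F C a b = F (rc_mirror (rc_dual C)) (end_circles C - b) (start_circles C - a))"

end

theory Submission
  imports Defs
begin

text \<open>
For a tree (n + 1 starting circles, one
ending circle) the grading forces p = 2|a| - 2|b|, so p \<ge> 2n needs a to contain at least n \<ge> 1
starting circles; the filtration rule then makes b non-empty, hence b is the ending circle, and
p \<ge> 2n leaves only a = all starting circles and p = 2n. For a dual tree (one starting circle,
n + 1 ending circles) the grading gives p = 2n + 2|a| - 2|b|; if a is the starting circle, the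
filtration rule forces b to consist of all n + 1 ending circles and p = 0 < 2n, so a = b = {}
and p = 2n. In both cases a non-zero map is thus supported on a single pair of monomials.
\<close>

lemma rc_wf_dim_pos:
  assumes "rc_wf C" "darts C \<noteq> {}"
  shows "1 \<le> dim C"
proof -
  let ?s = "sig C"
  obtain d where d: "d \<in> darts C" using assms(2) by blast
  have closed: "\<And>x. x \<in> darts C \<Longrightarrow> ?s x \<in> darts C"
    and order4: "\<And>x. x \<in> darts C \<Longrightarrow> ?s (?s (?s (?s x))) = x"
    and not_order2: "\<And>x. x \<in> darts C \<Longrightarrow> ?s (?s x) \<noteq> x"
    using assms(1) by (simp_all add: rc_wf_def)
  have "?s d \<noteq> d" "?s (?s d) \<noteq> d" "?s (?s (?s d)) \<noteq> d"
    "?s (?s d) \<noteq> ?s d" "?s (?s (?s d)) \<noteq> ?s d" "?s (?s (?s d)) \<noteq> ?s (?s d)"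
    using not_order2 closed d order4[OF d] by metis+
  then have "card {d, ?s d, ?s (?s d), ?s (?s (?s d))} = 4"
    by auto
  moreover have "{d, ?s d, ?s (?s d), ?s (?s (?s d))} \<subseteq> darts C"
    using closed d by blast
  ultimately have "4 \<le> card (darts C)"
    using assms(1) by (metis card_mono rc_wf_def)
  then show ?thesis
    by (simp add: dim_def)
qed

lemma rc_wf_finite_start_circles: "rc_wf C \<Longrightarrow> finite (start_circles C)"
  by (simp add: rc_wf_def start_circles_def)

lemma rc_wf_finite_end_circles: "rc_wf C \<Longrightarrow> finite (end_circles C)"
  by (simp add: rc_wf_def end_circles_def)

lemma dim_rc_dual [simp]: "dim (rc_dual C) = dim C"
  by (simp add: dim_def rc_dual_def)

lemma start_circles_rc_dual [simp]: "start_circles (rc_dual C) = end_circles C"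
  by (simp add: rc_dual_def start_circles_def end_circles_def start_circle_def end_circle_def)

lemma mrk'_rc_dual:
  assumes "rc_wf C" "d \<in> darts C"
  shows "mrk' (rc_dual C) d = mrk C d"
proof -
  let ?s = "sig C"
  have order4: "?s (?s (?s (?s d))) = d" and "?s (?s d) \<noteq> d"
    using assms by (simp_all add: rc_wf_def)
  then have ne: "?s (?s (?s d)) \<noteq> ?s d"
    by metis
  show ?thesis
  proof (cases "mrk C d = ?s d")
    case True
    then show ?thesis
      using ne by (simp add: mrk'_def rc_dual_def)
  next
    case False
    then have "?s (mrk C d) = d"
      using assms unfolding rc_wf_def by blast
    have commute: "mrk C (?s (?s x)) = ?s (?s (mrk C x))" if "x \<in> darts C" for x
      using assms(1) that by (simp add: rc_wf_def)
    have "?s (?s d) \<in> darts C"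
      using assms by (simp add: rc_wf_def)
    then have "mrk C d = ?s (?s (mrk C (?s (?s d))))"
      using commute order4 by metis
    also have "\<dots> = ?s (?s (?s (?s (mrk C d))))"
      using commute assms(2) by simp
    also have "\<dots> = ?s (?s (?s d))"
      using \<open>?s (mrk C d) = d\<close> by simp
    finally have "mrk C d = ?s (?s (?s d))" .
    then show ?thesis
      using False ne by (simp add: mrk'_def rc_dual_def)
  qed
qed

lemma end_circles_rc_dual:
  assumes "rc_wf C"
  shows "end_circles (rc_dual C) = start_circles C"
proof -
  have "step_rel (darts C) (mrk' (rc_dual C)) = step_rel (darts C) (mrk C)"
    using mrk'_rc_dual[OF assms] by (auto simp: step_rel_def)
  then show ?thesis
    by (simp add: end_circles_def start_circles_def end_circle_def start_circle_def rc_dual_def)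
qed

lemma has_bidegreeD:
  assumes "has_bidegree F C p" "a \<subseteq> start_circles C" "b \<subseteq> end_circles C" "F C a b"
  shows "int (card (end_circles C)) - 2 * int (card b) + int (dim C)
           = int (card (start_circles C)) - 2 * int (card a) + p"
  using assms unfolding has_bidegree_def gr0_def gr1_def by blast

lemma filtration_nonempty:
  assumes "filtration F C" "a \<subseteq> start_circles C" "b \<subseteq> end_circles C" "a \<noteq> {}" "F C a b"
  shows "b \<noteq> {}"
proof -
  obtain d where "d \<in> darts C" "start_circle C d \<in> a"
    using assms(2,4) unfolding start_circles_def by blast
  then have "end_circle C d \<in> b"
    using assms unfolding filtration_def by blast
  then show ?thesis
    by blast
qed

lemma filtration_all_start_circles:
  assumes "filtration F C" "b \<subseteq> end_circles C" "F C (start_circles C) b"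
  shows "b = end_circles C"
proof -
  have "end_circle C d \<in> b" if "d \<in> darts C" for d
    using assms that unfolding filtration_def start_circles_def by blast
  then show ?thesis
    using assms(2) unfolding end_circles_def by blast
qed

lemma tree_top_degree_support:
  assumes "is_tree C" "has_bidegree F C p" "filtration F C" "2 * int (dim C) \<le> p"
    and ab: "a \<subseteq> start_circles C" "b \<subseteq> end_circles C" "F C a b"
  shows "p = 2 * int (dim C) \<and> a = start_circles C \<and> b = end_circles C"
proof -
  have wf: "rc_wf C"
    using assms(1) by (simp add: is_tree_def rc_conf_def)
  have fin: "finite (start_circles C)" "finite (end_circles C)"
    using wf rc_wf_finite_start_circles rc_wf_finite_end_circles by blast+
  have card_start: "card (start_circles C) = dim C + 1"
    and card_end: "card (end_circles C) = 1"
    using assms(1) by (simp_all add: is_tree_def)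
  then have "darts C \<noteq> {}"
    unfolding end_circles_def by auto
  then have "1 \<le> dim C"
    using wf rc_wf_dim_pos by blast
  have card_a: "card a \<le> dim C + 1" and card_b: "card b \<le> 1"
    using card_mono[OF fin(1) ab(1)] card_mono[OF fin(2) ab(2)] card_start card_end by simp_all
  have grading: "p = 2 * int (card a) - 2 * int (card b)"
    using has_bidegreeD[OF assms(2) ab] card_start card_end by simp
  then have "a \<noteq> {}"
    using assms(4) \<open>1 \<le> dim C\<close> by auto
  then have "b \<noteq> {}"
    using filtration_nonempty[OF assms(3) ab(1,2) _ ab(3)] by blast
  then have "card b = 1"
    using card_b finite_subset[OF ab(2) fin(2)] card_0_eq by fastforce
  then have "card a = dim C + 1" "p = 2 * int (dim C)"
    using grading card_a assms(4) by linarith+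
  then show ?thesis
    using card_subset_eq[OF fin(1) ab(1)] card_subset_eq[OF fin(2) ab(2)]
      card_start card_end \<open>card b = 1\<close> by simp
qed

lemma dual_tree_top_degree_support:
  assumes "is_dual_tree C" "has_bidegree F C p" "filtration F C" "2 * int (dim C) \<le> p"
    and ab: "a \<subseteq> start_circles C" "b \<subseteq> end_circles C" "F C a b"
  shows "p = 2 * int (dim C) \<and> a = {} \<and> b = {}"
proof -
  have wf: "rc_wf C"
    using assms(1) by (simp add: is_dual_tree_def rc_conf_def)
  have fin: "finite (start_circles C)" "finite (end_circles C)"
    using wf rc_wf_finite_start_circles rc_wf_finite_end_circles by blast+
  have card_start: "card (start_circles C) = 1"
    and card_end: "card (end_circles C) = dim C + 1"
    using assms(1) end_circles_rc_dual[OF wf] by (simp_all add: is_dual_tree_def is_tree_def)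
  then have "darts C \<noteq> {}"
    unfolding start_circles_def by auto
  then have "1 \<le> dim C"
    using wf rc_wf_dim_pos by blast
  have grading: "p = 2 * int (dim C) + 2 * int (card a) - 2 * int (card b)"
    using has_bidegreeD[OF assms(2) ab] card_start card_end by simp
  have "a = {}"
  proof (rule ccontr)
    assume "a \<noteq> {}"
    then have "card a = 1"
      using card_mono[OF fin(1) ab(1)] finite_subset[OF ab(1) fin(1)] card_start card_0_eq
      by fastforce
    then have "a = start_circles C"
      using card_subset_eq[OF fin(1) ab(1)] card_start by simp
    then have "card b = dim C + 1"
      using filtration_all_start_circles[OF assms(3) ab(2)] ab(3) card_end by simp
    then show False
      using grading assms(4) \<open>card a = 1\<close> \<open>1 \<le> dim C\<close> by linarith
  qed
  then have "card b = 0" "p = 2 * int (dim C)"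
    using grading assms(4) by simp_all
  moreover have "finite b"
    using fin(2) ab(2) finite_subset by blast
  ultimately show ?thesis
    using \<open>a = {}\<close> by simp
qed

lemma nonzero_map_single_support:
  assumes "nonzero_map F C"
    and "\<And>a b. a \<subseteq> start_circles C \<Longrightarrow> b \<subseteq> end_circles C \<Longrightarrow> F C a b \<Longrightarrow> a = a1 \<and> b = b1"
  shows "\<forall>a \<subseteq> start_circles C. \<forall>b \<subseteq> end_circles C. F C a b \<longleftrightarrow> (a = a1 \<and> b = b1)"
  using assms unfolding nonzero_map_def by blast

theorem lemma3p3:
  fixes F :: assoc_maps and C :: rc and p :: int
  assumes "is_tree C \<or> is_dual_tree C"
    and "has_bidegree F C p"
    and "naturality F C"
    and "filtration F C"
    and "duality F C"
    and "nonzero_map F C"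
  shows "(p = 2 * int (dim C) \<longrightarrow>
            (is_tree C \<longrightarrow> (\<forall>a \<subseteq> start_circles C. \<forall>b \<subseteq> end_circles C.
                F C a b \<longleftrightarrow> (a = start_circles C \<and> b = end_circles C))) \<and>
            (is_dual_tree C \<longrightarrow> (\<forall>a \<subseteq> start_circles C. \<forall>b \<subseteq> end_circles C.
                F C a b \<longleftrightarrow> (a = {} \<and> b = {}))))
       \<and> (p > 2 * int (dim C) \<longrightarrow> (\<forall>a \<subseteq> start_circles C. \<forall>b \<subseteq> end_circles C. \<not> F C a b))"
proof (intro conjI impI)
  note tree = tree_top_degree_support[OF _ assms(2,4)]
  note dual_tree = dual_tree_top_degree_support[OF _ assms(2,4)]
  show "\<forall>a \<subseteq> start_circles C. \<forall>b \<subseteq> end_circles C.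
          F C a b \<longleftrightarrow> (a = start_circles C \<and> b = end_circles C)"
    if "p = 2 * int (dim C)" "is_tree C"
    using nonzero_map_single_support[OF assms(6)] tree that by simp
  show "\<forall>a \<subseteq> start_circles C. \<forall>b \<subseteq> end_circles C. F C a b \<longleftrightarrow> (a = {} \<and> b = {})"
    if "p = 2 * int (dim C)" "is_dual_tree C"
    using nonzero_map_single_support[OF assms(6)] dual_tree that by simp
  show "\<forall>a \<subseteq> start_circles C. \<forall>b \<subseteq> end_circles C. \<not> F C a b"
    if "2 * int (dim C) < p"
    using assms(1) tree dual_tree that by force
qed

end
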